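(* Let $f(u)=e^{g(u)}$ where $g\in C^3[0,\infty)$ satisfies $g'>0$, $g''>0$, $g'^2-g''\ge0$, $2g''^2-g'g'''>0$ on $[0,\infty)$. Then $\frac{h''(y)}{h'(y)}\le4$ for $y\ge-\log F(0)$.
   Context: $F(u)=\int_u^\infty\frac{ds}{f(s)}$, $\eta(y)=F^{-1}(e^{-y})$ for $y\ge-\log F(0)$ (with $F^{-1}$ the inverse of the decreasing function $F$), and $h(y)=1-f'(\eta(y))F(\eta(y))$. Under the hypotheses $h'(y)<0$ for $y\ge -\log F(0)$. *)

theory Defs
  imports "HOL-Analysis.Analysis"
begin

definition fexp :: "(real \<Rightarrow> real) \<Rightarrow> real \<Rightarrow> real" where
  "fexp g u = exp (g u)"

definition Fint :: "(real \<Rightarrow> real) \<Rightarrow> real \<Rightarrow> real" where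
  "Fint g u = integral {u..} (\<lambda>s. 1 / fexp g s)"

definition eta :: "(real \<Rightarrow> real) \<Rightarrow> real \<Rightarrow> real" where
  "eta g y = (THE u. 0 \<le> u \<and> Fint g u = exp (- y))"

text \<open>h(y) = 1 - f'(eta y) F(eta y), where f' = g' exp(g), g' given as g1.\<close>
definition hfun :: "(real \<Rightarrow> real) \<Rightarrow> (real \<Rightarrow> real) \<Rightarrow> real \<Rightarrow> real" where
  "hfun g g1 y = 1 - g1 (eta g y) * fexp g (eta g y) * Fint g (eta g y)"

end

theory Submission
  imports Defs
begin

(* Put u = eta y and E = F(u) exp(g u). Since -ln F has derivative exp(-g)/F, its inverse eta has
   derivative E, and h', h'' are polynomials in E and g'(u), g''(u), g'''(u).  The functions
   F - g'/(g'' + g'^2) exp(-g) and exp(-g)/g' - F vanish at infinity and are nonincreasing (the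
   first because 2 g''^2 > g' g'''), so g'/(g'' + g'^2) <= E <= 1/g'.  Hence h' <= 0, and
   h'' - 4 h' = E Q(E) for a quadratic Q that is positive at both ends of this interval and
   therefore nonnegative on all of it. *)

lemma DERIV_at_if_DERIV_within_atLeast:
  assumes "(f has_real_derivative D) (at x within {a..})" and "a < x"
  shows "(f has_real_derivative D) (at x)"
  using assms at_within_interior[of x "{a..}"] by simp

lemma DERIV_nonneg_imp_mono_on_atLeast:
  fixes f f' :: "real \<Rightarrow> real"
  assumes deriv: "\<And>x. a \<le> x \<Longrightarrow> (f has_real_derivative f' x) (at x within {a..})"
    and nonneg: "\<And>x. a \<le> x \<Longrightarrow> 0 \<le> f' x"
  shows "mono_on {a..} f"
proof (rule mono_onI)
  fix x y assume xy: "x \<in> {a..}" "y \<in> {a..}" "x \<le> y"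
  have "continuous_on {a..} f"
    using deriv by (intro DERIV_continuous_on) auto
  then have "continuous_on {x..y} f"
    by (rule continuous_on_subset) (use xy in auto)
  moreover have "\<exists>D. (f has_real_derivative D) (at z) \<and> 0 \<le> D" if "x < z" for z
    using DERIV_at_if_DERIV_within_atLeast[OF deriv] nonneg that xy by force
  ultimately show "f x \<le> f y"
    using DERIV_nonneg_imp_increasing_open[OF \<open>x \<le> y\<close>] by blast
qed

lemma DERIV_pos_imp_strict_mono_on_atLeast:
  fixes f f' :: "real \<Rightarrow> real"
  assumes deriv: "\<And>x. a \<le> x \<Longrightarrow> (f has_real_derivative f' x) (at x within {a..})"
    and pos: "\<And>x. a \<le> x \<Longrightarrow> 0 < f' x"
  shows "strict_mono_on {a..} f"
proof (rule strict_mono_onI)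
  fix x y assume xy: "x \<in> {a..}" "y \<in> {a..}" "x < y"
  have "continuous_on {a..} f"
    using deriv by (intro DERIV_continuous_on) auto
  then have "continuous_on {x..y} f"
    by (rule continuous_on_subset) (use xy in auto)
  moreover have "\<exists>D. (f has_real_derivative D) (at z) \<and> 0 < D" if "x < z" for z
    using DERIV_at_if_DERIV_within_atLeast[OF deriv] pos that xy by force
  ultimately show "f x < f y"
    using DERIV_pos_imp_increasing_open[OF \<open>x < y\<close>] by blast
qed

lemma DERIV_nonpos_tendsto_zero_imp_nonneg:
  fixes f f' :: "real \<Rightarrow> real"
  assumes deriv: "\<And>x. a \<le> x \<Longrightarrow> (f has_real_derivative f' x) (at x within {a..})"
    and nonpos: "\<And>x. a \<le> x \<Longrightarrow> f' x \<le> 0"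
    and lim: "(f \<longlongrightarrow> 0) at_top" and "a \<le> u"
  shows "0 \<le> f u"
proof (rule tendsto_upperbound[OF lim])
  have mono: "mono_on {a..} (\<lambda>x. - f x)"
    by (rule DERIV_nonneg_imp_mono_on_atLeast[OF DERIV_minus[OF deriv]]) (use nonpos in auto)
  show "\<forall>\<^sub>F x in at_top. f x \<le> f u"
    using eventually_ge_at_top[of u]
    by (rule eventually_mono) (use mono_onD[OF mono] \<open>a \<le> u\<close> in force)
qed simp

lemma has_real_derivative_inverse_within:
  fixes f g :: "real \<Rightarrow> real"
  assumes df: "(f has_real_derivative D) (at (g y) within T)" and "D \<noteq> 0"
    and "g ` S \<subseteq> T" and fg: "\<And>z. z \<in> S \<Longrightarrow> f (g z) = z"
    and "continuous (at y within S) g" and "y \<in> S"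
  shows "(g has_real_derivative inverse D) (at y within S)"
proof -
  have "filterlim g (at (g y) within T) (at y within S)"
    unfolding filterlim_at
  proof
    show "\<forall>\<^sub>F z in at y within S. g z \<in> T \<and> g z \<noteq> g y"
      unfolding eventually_at_filter
    proof (rule always_eventually, intro allI impI)
      fix z assume "z \<noteq> y" "z \<in> S"
      then show "g z \<in> T \<and> g z \<noteq> g y"
        using assms(3,6) fg by (metis image_subset_iff)
    qed
    show "(g \<longlongrightarrow> g y) (at y within S)"
      using assms by (simp add: continuous_within)
  qed
  moreover have "((\<lambda>w. (f w - f (g y)) / (w - g y)) \<longlongrightarrow> D) (at (g y) within T)"
    using df by (simp add: has_field_derivative_iff)
  ultimately have "((\<lambda>z. (f (g z) - f (g y)) / (g z - g y)) \<longlongrightarrow> D) (at y within S)"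
    by (rule filterlim_compose[rotated])
  then have "((\<lambda>z. inverse ((f (g z) - f (g y)) / (g z - g y))) \<longlongrightarrow> inverse D) (at y within S)"
    using \<open>D \<noteq> 0\<close> by (rule tendsto_inverse)
  moreover have "\<forall>\<^sub>F z in at y within S.
      inverse ((f (g z) - f (g y)) / (g z - g y)) = (g z - g y) / (z - y)"
    unfolding eventually_at_filter by (rule always_eventually) (auto simp: fg \<open>y \<in> S\<close>)
  ultimately have "((\<lambda>z. (g z - g y) / (z - y)) \<longlongrightarrow> inverse D) (at y within S)"
    by (rule Lim_transform_eventually)
  then show ?thesis
    by (simp add: has_field_derivative_iff)
qed

lemma continuous_within_inverse_atLeast:
  fixes f g :: "real \<Rightarrow> real"
  assumes cont: "continuous_on {a..} f" and mono: "strict_mono_on {a..} f"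
    and inv: "\<And>z. f a \<le> z \<Longrightarrow> a \<le> g z \<and> f (g z) = z" and "f a \<le> y"
  shows "continuous (at y within {f a..}) g"
proof -
  define c where "c = g y + 1"
  have less_iff: "f x < f x' \<longleftrightarrow> x < x'" if "a \<le> x" "a \<le> x'" for x x'
    using mono that by (auto simp: strict_mono_on_less)
  have "g (f x) = x" if "x \<in> {a..c}" for x
    using inv[of "f x"] mono that by (auto simp: strict_mono_on_eq strict_mono_on_less_eq)
  then have "continuous_on (f ` {a..c}) g"
    by (intro continuous_on_inv continuous_on_subset[OF cont]) auto
  moreover have "{f a..f c} \<subseteq> f ` {a..c}"
  proof
    fix z assume z: "z \<in> {f a..f c}"
    then have "g z \<le> c"
      using inv[of z] inv[OF \<open>f a \<le> y\<close>] less_iff[of c "g z"] by (auto simp: c_def)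
    then show "z \<in> f ` {a..c}"
      using inv[of z] z by (intro image_eqI[of z f "g z"]) auto
  qed
  ultimately have "continuous_on {f a..f c} g"
    by (rule continuous_on_subset)
  moreover have "y < f c"
    using inv[OF \<open>f a \<le> y\<close>] less_iff[of "g y" c] by (auto simp: c_def)
  ultimately have "continuous (at y within {f a..f c}) g"
    using \<open>f a \<le> y\<close> by (simp add: continuous_on_eq_continuous_within)
  moreover have "at y within {f a..f c} = at y within {f a..}"
    using \<open>y < f c\<close> by (intro at_within_nhd[of _ "{..<f c}"]) auto
  ultimately show ?thesis
    by simp
qed

lemma integrable_on_atLeast_if_exp_bound:
  fixes e :: "real \<Rightarrow> real"
  assumes cont: "continuous_on {a..} e"
    and bound: "\<And>s. a \<le> s \<Longrightarrow> \<bar>e s\<bar> \<le> C * exp (- k * s)"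
    and "0 < k" "a \<le> u"
  shows "e integrable_on {u..}"
proof -
  have "(\<lambda>s. C * exp (- k * s)) integrable_on {u..}"
    using integrable_on_cmult_left[OF integrable_on_exp_minus_to_infinity[OF \<open>0 < k\<close>]] by simp
  then have "e absolutely_integrable_on {u..}"
  proof (rule measurable_bounded_by_integrable_imp_absolutely_integrable[rotated 2])
    show "e \<in> borel_measurable (lebesgue_on {u..})"
      by (rule continuous_imp_measurable_on_sets_lebesgue)
         (use continuous_on_subset[OF cont] \<open>a \<le> u\<close> in auto)
  qed (use bound \<open>a \<le> u\<close> in auto)
  then show ?thesis
    using set_lebesgue_integral_eq_integral(1) by blast
qed

lemma tail_integral_has_real_derivative:
  fixes e :: "real \<Rightarrow> real"
  assumes cont: "continuous_on {a..} e" and int: "\<And>u. a \<le> u \<Longrightarrow> e integrable_on {u..}"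
    and "a \<le> u"
  shows "((\<lambda>v. integral {v..} e) has_real_derivative - e u) (at u within {a..})"
proof -
  have split: "integral {a..} e = integral {a..v} e + integral {v..} e" if "a \<le> v" for v
  proof -
    have "(e has_integral (integral {a..v} e + integral {v..} e)) ({a..v} \<union> {v..})"
    proof (rule has_integral_Un)
      show "(e has_integral integral {a..v} e) {a..v}"
        using integrable_continuous_real[OF continuous_on_subset[OF cont]] by auto
      show "(e has_integral integral {v..} e) {v..}"
        using int[OF that] by auto
      have "{a..v} \<inter> {v..} = {v}"
        using that by auto
      then show "negligible ({a..v} \<inter> {v..})"
        by simp
    qed
    moreover have "{a..v} \<union> {v..} = {a..}"
      using that by auto
    ultimately show ?thesis
      by (simp add: integral_unique)
  qed
  have "((\<lambda>v. integral {a..v} e) has_real_derivative e u) (at u within {a..u+1})"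
    by (rule integral_has_real_derivative) (use continuous_on_subset[OF cont] \<open>a \<le> u\<close> in auto)
  moreover have "at u within {a..u+1} = at u within {a..}"
    by (rule at_within_nhd[of _ "{..<u+1}"]) auto
  ultimately have "((\<lambda>v. integral {a..} e - integral {a..v} e) has_real_derivative - e u)
      (at u within {a..})"
    using DERIV_diff[OF DERIV_const] by fastforce
  then show ?thesis
    by (rule has_field_derivative_transform_within[where d=1]) (use \<open>a \<le> u\<close> split in auto)
qed

lemma tail_integral_tendsto_zero:
  fixes e :: "real \<Rightarrow> real"
  assumes cont: "continuous_on {a..} e"
    and bound: "\<And>s. a \<le> s \<Longrightarrow> 0 \<le> e s \<and> e s \<le> C * exp (- k * s)"
    and "0 < k"
  shows "((\<lambda>u. integral {u..} e) \<longlongrightarrow> 0) at_top"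
proof (rule tendsto_sandwich[of "\<lambda>_. 0" _ _ "\<lambda>u. C * exp (- k * u) / k"])
  have int: "e integrable_on {u..}" if "a \<le> u" for u
    by (rule integrable_on_atLeast_if_exp_bound[OF cont _ \<open>0 < k\<close> that]) (use bound in force)
  show "\<forall>\<^sub>F u in at_top. 0 \<le> integral {u..} e"
    using eventually_ge_at_top[of a]
    by (rule eventually_mono) (use int bound in \<open>force intro: integral_nonneg\<close>)
  have tail_bound: "integral {u..} e \<le> C * exp (- k * u) / k" if "a \<le> u" for u
  proof -
    have exp_int: "((\<lambda>s. C * exp (- k * s)) has_integral C * exp (- k * u) / k) {u..}"
      using has_integral_mult_right[OF has_integral_exp_minus_to_infinity[OF \<open>0 < k\<close>]] by simp
    then have "integral {u..} (\<lambda>s. C * exp (- k * s)) = C * exp (- k * u) / k"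
      by (rule integral_unique)
    moreover have "integral {u..} e \<le> integral {u..} (\<lambda>s. C * exp (- k * s))"
      by (intro integral_le[OF int[OF that] has_integral_integrable[OF exp_int]])
         (use bound that in auto)
    ultimately show ?thesis
      by simp
  qed
  show "\<forall>\<^sub>F u in at_top. integral {u..} e \<le> C * exp (- k * u) / k"
    using eventually_ge_at_top[of a] by (rule eventually_mono) (rule tail_bound)
  show "((\<lambda>u. C * exp (- k * u) / k) \<longlongrightarrow> 0) at_top"
  proof -
    have "filterlim (\<lambda>u. - k * u) at_bot at_top"
      by (rule filterlim_tendsto_neg_mult_at_bot[OF tendsto_const _ filterlim_ident])
         (use \<open>0 < k\<close> in simp)
    then have "((\<lambda>u. exp (- k * u)) \<longlongrightarrow> 0) at_top"
      using filterlim_compose[OF exp_at_bot] by blast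
    then show ?thesis
      by (intro tendsto_divide_zero tendsto_mult_right_zero)
  qed
qed simp

lemma quadratic_nonneg_between:
  fixes \<alpha> \<beta> k p q x :: real
  assumes "0 \<le> \<beta>" "0 \<le> p" "p \<le> x" "x \<le> q"
    and Qp: "0 \<le> \<alpha> + \<beta> * p - k * p\<^sup>2" and Qq: "0 \<le> \<alpha> + \<beta> * q - k * q\<^sup>2"
  shows "0 \<le> \<alpha> + \<beta> * x - k * x\<^sup>2"
proof (cases "0 \<le> k")
  case True
  \<comment> \<open>The concave parabola lies above its chord over \<open>[p, q]\<close>.\<close>
  have "(q - p) * (\<alpha> + \<beta> * x - k * x\<^sup>2) =
      (q - x) * (\<alpha> + \<beta> * p - k * p\<^sup>2) + (x - p) * (\<alpha> + \<beta> * q - k * q\<^sup>2)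
      + k * (x - p) * (q - x) * (q - p)"
    by (simp add: algebra_simps power2_eq_square)
  also have "\<dots> \<ge> 0"
    using assms True by (intro add_nonneg_nonneg mult_nonneg_nonneg) auto
  finally show ?thesis
    using assms by (cases "p = q") (auto simp: zero_le_mult_iff)
next
  case False
  \<comment> \<open>The convex parabola is increasing on \<open>[0, \<infinity>)\<close>.\<close>
  have "\<alpha> + \<beta> * x - k * x\<^sup>2 - (\<alpha> + \<beta> * p - k * p\<^sup>2) = (x - p) * (\<beta> - k * (x + p))"
    by (simp add: algebra_simps power2_eq_square)
  also have "\<dots> \<ge> 0"
  proof (rule mult_nonneg_nonneg)
    have "k * (x + p) \<le> 0"
      using assms False by (intro mult_nonpos_nonneg) auto
    then show "0 \<le> \<beta> - k * (x + p)"
      using \<open>0 \<le> \<beta>\<close> by linarith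
  qed (use assms in simp)
  finally show ?thesis
    using Qp by linarith
qed

(* With a, b, c the values of g', g'', g''' at eta y and E = eta' y, numerator and denominator
   are h'' y and h' y. *)
lemma h_derivative_ratio_le_four:
  fixes a b c E :: real
  assumes "0 < a" "0 < b" "b \<le> a\<^sup>2" "a * c < 2 * b\<^sup>2"
    and lower: "a / (b + a\<^sup>2) \<le> E" and upper: "E \<le> 1 / a"
  shows "E * (- a + 3 * (b + a\<^sup>2) * E - (c + 4 * a * b + 2 * a ^ 3) * E\<^sup>2)
      / (E * (a - (b + a\<^sup>2) * E)) \<le> 4"
proof -
  define s where "s = b + a\<^sup>2"
  define k where "k = c + 4 * a * b + 2 * a ^ 3"
  have "0 < s"
    using assms by (simp add: s_def add_pos_nonneg)
  have "0 < a / s"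
    using \<open>0 < a\<close> \<open>0 < s\<close> by simp
  then have "0 < E"
    using lower by (simp add: s_def)
  have "a \<le> s * E"
    using lower \<open>0 < s\<close> by (simp add: s_def pos_divide_le_eq mult.commute)
  then have den: "E * (a - s * E) \<le> 0"
    using \<open>0 < E\<close> by (simp add: mult_nonneg_nonpos)
  have "b\<^sup>2 \<le> a\<^sup>2 * b"
    using mult_right_mono[OF \<open>b \<le> a\<^sup>2\<close>] \<open>0 < b\<close> by (simp add: power2_eq_square)
  then have "a * c < a * (2 * a * b)"
    using \<open>a * c < 2 * b\<^sup>2\<close> by (simp add: power2_eq_square algebra_simps)
  then have "c < 2 * a * b"
    using \<open>0 < a\<close> by simp
  have "0 \<le> - 5 * a + 7 * s * E - k * E\<^sup>2"
  proof (rule quadratic_nonneg_between[of "7 * s" "a / s" E "1 / a"])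
    have "- 5 * a + 7 * s * (a / s) - k * (a / s)\<^sup>2 = a * (2 * s\<^sup>2 - k * a) / s\<^sup>2"
      using \<open>0 < s\<close> by (simp add: field_simps power2_eq_square)
    also have "2 * s\<^sup>2 - k * a = 2 * b\<^sup>2 - a * c"
      by (simp add: s_def k_def algebra_simps power2_eq_square power3_eq_cube)
    finally show "0 \<le> - 5 * a + 7 * s * (a / s) - k * (a / s)\<^sup>2"
      using \<open>0 < a\<close> \<open>a * c < 2 * b\<^sup>2\<close> by simp
    have "- 5 * a + 7 * s * (1 / a) - k * (1 / a)\<^sup>2 = (3 * a * b - c) / a\<^sup>2"
      using \<open>0 < a\<close> by (simp add: s_def k_def field_simps power2_eq_square power3_eq_cube)
    then show "0 \<le> - 5 * a + 7 * s * (1 / a) - k * (1 / a)\<^sup>2"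
      using \<open>c < 2 * a * b\<close> mult_pos_pos[OF \<open>0 < a\<close> \<open>0 < b\<close>] by simp
  qed (use \<open>0 < s\<close> \<open>0 < a / s\<close> lower upper in \<open>auto simp: s_def\<close>)
  then have "0 \<le> E * (- 5 * a + 7 * s * E - k * E\<^sup>2)"
    using \<open>0 < E\<close> by simp
  moreover have "E * (- a + 3 * s * E - k * E\<^sup>2) - 4 * (E * (a - s * E))
      = E * (- 5 * a + 7 * s * E - k * E\<^sup>2)"
    by (simp add: algebra_simps power2_eq_square)
  ultimately have num: "4 * (E * (a - s * E)) \<le> E * (- a + 3 * s * E - k * E\<^sup>2)"
    by linarith
  have "X / Y \<le> 4" if "Y \<le> 0" "4 * Y \<le> X" for X Y :: real
    using that by (cases "Y = 0") (auto simp: divide_le_eq)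
  from this[OF den num] show ?thesis
    by (simp only: s_def k_def)
qed

locale admissible_exponent =
  fixes g g1 g2 g3 :: "real \<Rightarrow> real"
  assumes d1: "\<And>x. 0 \<le> x \<Longrightarrow> (g has_real_derivative g1 x) (at x within {0..})"
    and d2: "\<And>x. 0 \<le> x \<Longrightarrow> (g1 has_real_derivative g2 x) (at x within {0..})"
    and d3: "\<And>x. 0 \<le> x \<Longrightarrow> (g2 has_real_derivative g3 x) (at x within {0..})"
    and pos1: "\<And>x. 0 \<le> x \<Longrightarrow> g1 x > 0"
    and pos2: "\<And>x. 0 \<le> x \<Longrightarrow> g2 x > 0"
    and h3: "\<And>x. 0 \<le> x \<Longrightarrow> (g1 x)\<^sup>2 - g2 x \<ge> 0"
    and h4: "\<And>x. 0 \<le> x \<Longrightarrow> 2 * (g2 x)\<^sup>2 - g1 x * g3 x > 0"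
begin

definition e :: "real \<Rightarrow> real" where "e s = exp (- g s)"

lemma e_pos: "0 < e s"
  by (simp add: e_def)

lemma g1_0_pos: "0 < g1 0"
  using pos1 by simp

lemma e_has_real_derivative:
  "0 \<le> u \<Longrightarrow> (e has_real_derivative - g1 u * e u) (at u within {0..})"
  unfolding e_def[abs_def]
  by (rule DERIV_cong[OF DERIV_chain2[OF DERIV_exp DERIV_minus[OF d1]]]) auto

lemma e_continuous_on: "continuous_on {0..} e"
  using e_has_real_derivative by (intro DERIV_continuous_on) auto

lemma g1_mono_on: "mono_on {0..} g1"
  by (rule DERIV_nonneg_imp_mono_on_atLeast[OF d2]) (use pos2 less_imp_le in auto)

lemma g_ge_tangent_at_0:
  assumes "0 \<le> x" shows "g 0 + g1 0 * x \<le> g x"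
proof -
  have "mono_on {0..} (\<lambda>x. g x - g1 0 * x)"
  proof (rule DERIV_nonneg_imp_mono_on_atLeast)
    show "((\<lambda>x. g x - g1 0 * x) has_real_derivative g1 x - g1 0) (at x within {0..})"
      if "0 \<le> x" for x
      using DERIV_diff[OF d1[OF that] DERIV_cmult[OF DERIV_ident, of "g1 0"]] by simp
    show "0 \<le> g1 x - g1 0" if "0 \<le> x" for x
      using mono_onD[OF g1_mono_on, of 0 x] that by simp
  qed
  then show ?thesis
    using mono_onD[of _ _ 0 x] assms by fastforce
qed

lemma e_exp_bound: "0 \<le> s \<Longrightarrow> 0 \<le> e s \<and> e s \<le> exp (- g 0) * exp (- g1 0 * s)"
  using g_ge_tangent_at_0[of s] e_pos[of s] by (simp add: e_def flip: exp_add)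

lemma e_tendsto_zero: "(e \<longlongrightarrow> 0) at_top"
proof (rule tendsto_sandwich[of "\<lambda>_. 0" _ _ "\<lambda>s. exp (- g 0) * exp (- g1 0 * s)"])
  have "filterlim (\<lambda>s. - g1 0 * s) at_bot at_top"
    by (rule filterlim_tendsto_neg_mult_at_bot[OF tendsto_const _ filterlim_ident])
       (use g1_0_pos in simp)
  then have "((\<lambda>s. exp (- g1 0 * s)) \<longlongrightarrow> 0) at_top"
    using filterlim_compose[OF exp_at_bot] by blast
  then show "((\<lambda>s. exp (- g 0) * exp (- g1 0 * s)) \<longlongrightarrow> 0) at_top"
    by (rule tendsto_mult_right_zero)
  show "\<forall>\<^sub>F s in at_top. 0 \<le> e s"
    using e_pos by (auto intro: always_eventually less_imp_le)
  show "\<forall>\<^sub>F s in at_top. e s \<le> exp (- g 0) * exp (- g1 0 * s)"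
    using eventually_ge_at_top[of 0] by (rule eventually_mono) (use e_exp_bound in blast)
qed simp

lemma e_integrable_on: "0 \<le> u \<Longrightarrow> e integrable_on {u..}"
  by (rule integrable_on_atLeast_if_exp_bound[OF e_continuous_on _ g1_0_pos])
     (use e_exp_bound in auto)

lemma Fint_eq_integral: "Fint g u = integral {u..} e"
proof -
  have "(\<lambda>s. 1 / fexp g s) = e"
    by (auto simp: fexp_def e_def exp_minus inverse_eq_divide)
  then show ?thesis
    by (simp add: Fint_def)
qed

lemma Fint_has_real_derivative:
  "0 \<le> u \<Longrightarrow> (Fint g has_real_derivative - e u) (at u within {0..})"
  unfolding Fint_eq_integral[abs_def]
  by (rule tail_integral_has_real_derivative[OF e_continuous_on e_integrable_on])

lemma Fint_tendsto_zero: "(Fint g \<longlongrightarrow> 0) at_top"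
  unfolding Fint_eq_integral[abs_def]
  by (rule tail_integral_tendsto_zero[OF e_continuous_on e_exp_bound g1_0_pos])

lemma bounded_times_e_tendsto_zero:
  assumes "\<And>u. 0 \<le> u \<Longrightarrow> 0 \<le> q u \<and> q u \<le> 1 / g1 u"
  shows "((\<lambda>u. q u * e u) \<longlongrightarrow> 0) at_top"
proof (rule tendsto_sandwich[of "\<lambda>_. 0" _ _ "\<lambda>u. 1 / g1 0 * e u"])
  have le: "q u * e u \<le> 1 / g1 0 * e u" if "0 \<le> u" for u
  proof -
    have "1 / g1 u \<le> 1 / g1 0"
      by (rule frac_le) (use mono_onD[OF g1_mono_on, of 0 u] g1_0_pos that in auto)
    then have "q u \<le> 1 / g1 0"
      using assms[OF that] by linarith
    from mult_right_mono[OF this less_imp_le[OF e_pos]] show ?thesis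
      by simp
  qed
  show "\<forall>\<^sub>F u in at_top. q u * e u \<le> 1 / g1 0 * e u"
    using eventually_ge_at_top[of 0] by (rule eventually_mono) (rule le)
  show "\<forall>\<^sub>F u in at_top. 0 \<le> q u * e u"
    using eventually_ge_at_top[of 0]
    by (rule eventually_mono) (use assms e_pos in \<open>simp add: less_imp_le\<close>)
  show "((\<lambda>u. 1 / g1 0 * e u) \<longlongrightarrow> 0) at_top"
    using e_tendsto_zero by (rule tendsto_mult_right_zero)
qed simp

definition lower_ratio :: "real \<Rightarrow> real" where
  "lower_ratio x = g1 x / (g2 x + (g1 x)\<^sup>2)"

lemma lower_ratio_bounds: "0 \<le> x \<Longrightarrow> 0 \<le> lower_ratio x \<and> lower_ratio x \<le> 1 / g1 x"
  using pos1[of x] pos2[of x]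
  by (simp add: lower_ratio_def divide_le_eq field_simps power2_eq_square add_pos_pos)

lemma lower_ratio_has_real_derivative:
  assumes "0 \<le> x"
  shows "(lower_ratio has_real_derivative
      (g2 x * (g2 x + (g1 x)\<^sup>2) - g1 x * (g3 x + 2 * g1 x * g2 x)) / (g2 x + (g1 x)\<^sup>2)\<^sup>2)
      (at x within {0..})"
proof -
  have "0 < g2 x + (g1 x)\<^sup>2"
    using pos2[OF assms] by (simp add: add_pos_nonneg)
  then show ?thesis
    unfolding lower_ratio_def[abs_def]
    by (intro DERIV_cong[OF DERIV_divide[OF d2[OF assms]
          DERIV_add[OF d3[OF assms] DERIV_power[OF d2[OF assms], of 2]]]])
       (simp_all add: power2_eq_square algebra_simps)
qed

lemma Fint_ge:
  assumes "0 \<le> u" shows "lower_ratio u * e u \<le> Fint g u"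
proof -
  have deriv_eq: "- E - (a / s * (- a * E) + (b * s - a * (c + 2 * a * b)) / s\<^sup>2 * E)
      = E * (a * c - 2 * b\<^sup>2) / s\<^sup>2" if "s = b + a\<^sup>2" "s \<noteq> 0" for a b c s E :: real
  proof -
    have "- E - (a / s * (- a * E) + (b * s - a * (c + 2 * a * b)) / s\<^sup>2 * E)
        = E * (a\<^sup>2 * s - s\<^sup>2 - b * s + a * c + 2 * a\<^sup>2 * b) / s\<^sup>2"
      using \<open>s \<noteq> 0\<close> by (simp add: field_simps power2_eq_square)
    also have "a\<^sup>2 * s - s\<^sup>2 - b * s + a * c + 2 * a\<^sup>2 * b = a * c - 2 * b\<^sup>2"
      using \<open>s = b + a\<^sup>2\<close> by (simp add: algebra_simps power2_eq_square)
    finally show ?thesis .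
  qed
  have "0 \<le> Fint g u - lower_ratio u * e u"
  proof (rule DERIV_nonpos_tendsto_zero_imp_nonneg[OF _ _ _ assms])
    fix x :: real assume x: "0 \<le> x"
    have "0 < g2 x + (g1 x)\<^sup>2"
      using pos2[OF x] by (simp add: add_pos_nonneg)
    show "((\<lambda>x. Fint g x - lower_ratio x * e x) has_real_derivative
        e x * (g1 x * g3 x - 2 * (g2 x)\<^sup>2) / (g2 x + (g1 x)\<^sup>2)\<^sup>2) (at x within {0..})"
      by (rule DERIV_cong[OF DERIV_diff[OF Fint_has_real_derivative[OF x]
            DERIV_mult'[OF lower_ratio_has_real_derivative[OF x] e_has_real_derivative[OF x]]]],
          unfold lower_ratio_def, rule deriv_eq) (use \<open>0 < g2 x + (g1 x)\<^sup>2\<close> in auto)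
    show "e x * (g1 x * g3 x - 2 * (g2 x)\<^sup>2) / (g2 x + (g1 x)\<^sup>2)\<^sup>2 \<le> 0"
      using h4[OF x] e_pos[of x] by (intro divide_nonpos_nonneg mult_nonneg_nonpos) auto
  next
    show "((\<lambda>x. Fint g x - lower_ratio x * e x) \<longlongrightarrow> 0) at_top"
      using tendsto_diff[OF Fint_tendsto_zero bounded_times_e_tendsto_zero[OF lower_ratio_bounds]]
      by simp
  qed
  then show ?thesis
    by simp
qed

lemma Fint_le:
  assumes "0 \<le> u" shows "Fint g u \<le> e u / g1 u"
proof -
  have "0 \<le> e u / g1 u - Fint g u"
  proof (rule DERIV_nonpos_tendsto_zero_imp_nonneg[OF _ _ _ assms])
    fix x :: real assume "0 \<le> x"
    show "((\<lambda>x. e x / g1 x - Fint g x) has_real_derivative - e x * g2 x / (g1 x)\<^sup>2)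
        (at x within {0..})"
      by (rule DERIV_cong[OF DERIV_diff[OF
            DERIV_divide[OF e_has_real_derivative[OF \<open>0 \<le> x\<close>] d2[OF \<open>0 \<le> x\<close>]]
            Fint_has_real_derivative[OF \<open>0 \<le> x\<close>]]])
         (use pos1[OF \<open>0 \<le> x\<close>] in \<open>auto simp: field_simps power2_eq_square\<close>)
    show "- e x * g2 x / (g1 x)\<^sup>2 \<le> 0"
      using pos2[OF \<open>0 \<le> x\<close>] e_pos[of x] by (simp add: less_imp_le)
  next
    have "((\<lambda>x. 1 / g1 x * e x) \<longlongrightarrow> 0) at_top"
      by (rule bounded_times_e_tendsto_zero) (simp add: pos1 less_imp_le)
    then show "((\<lambda>x. e x / g1 x - Fint g x) \<longlongrightarrow> 0) at_top"
      using tendsto_diff[OF _ Fint_tendsto_zero] by simp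
  qed
  then show ?thesis
    by simp
qed

lemma Fint_pos:
  assumes "0 \<le> u" shows "0 < Fint g u"
proof -
  have "0 < lower_ratio u * e u"
    using pos1[OF assms] pos2[OF assms] e_pos by (simp add: lower_ratio_def add_pos_nonneg)
  then show ?thesis
    using Fint_ge[OF assms] by linarith
qed

definition phi :: "real \<Rightarrow> real" where "phi u = - ln (Fint g u)"

lemma Fint_eq_exp_phi: "0 \<le> u \<Longrightarrow> Fint g u = exp (- phi u)"
  using Fint_pos by (simp add: phi_def)

lemma phi_has_real_derivative:
  assumes "0 \<le> u" shows "(phi has_real_derivative e u / Fint g u) (at u within {0..})"
  unfolding phi_def[abs_def]
  by (rule DERIV_cong[OF DERIV_minus[OF DERIV_chain2[OF DERIV_ln_divide[OF Fint_pos[OF assms]]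
          Fint_has_real_derivative[OF assms]]]]) simp

lemma phi_strict_mono_on: "strict_mono_on {0..} phi"
  by (rule DERIV_pos_imp_strict_mono_on_atLeast[OF phi_has_real_derivative])
     (auto intro: divide_pos_pos e_pos Fint_pos)

lemma phi_continuous_on: "continuous_on {0..} phi"
  using phi_has_real_derivative by (intro DERIV_continuous_on) auto

lemma eta_inverse_phi:
  assumes "phi 0 \<le> y" shows "0 \<le> eta g y \<and> phi (eta g y) = y"
proof -
  have "\<forall>\<^sub>F u in at_top. Fint g u < exp (- y)"
    by (rule order_tendstoD(2)[OF Fint_tendsto_zero]) simp
  then have "\<forall>\<^sub>F u in at_top. 0 \<le> u \<and> Fint g u < exp (- y)"
    by (rule eventually_conj[OF eventually_ge_at_top])
  then obtain U where "0 \<le> U" "Fint g U < exp (- y)"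
    using eventually_happens'[OF trivial_limit_at_top_linorder] by blast
  then have "y \<le> phi U"
    using Fint_eq_exp_phi[OF \<open>0 \<le> U\<close>] by simp
  have iff: "Fint g u = exp (- y) \<longleftrightarrow> phi u = y" if "0 \<le> u" for u
    using Fint_eq_exp_phi[OF that] by auto
  have "\<exists>!u. 0 \<le> u \<and> Fint g u = exp (- y)"
  proof (rule ex_ex1I)
    show "\<exists>u. 0 \<le> u \<and> Fint g u = exp (- y)"
      using IVT'[of phi 0 y U] assms \<open>y \<le> phi U\<close> \<open>0 \<le> U\<close> iff
        continuous_on_subset[OF phi_continuous_on, of "{0..U}"] by auto
    show "u = v"
      if "0 \<le> u \<and> Fint g u = exp (- y)" "0 \<le> v \<and> Fint g v = exp (- y)" for u v
      using that iff strict_mono_on_eq[OF phi_strict_mono_on, of u v] by auto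
  qed
  then show ?thesis
    unfolding eta_def using theI'[of "\<lambda>u. 0 \<le> u \<and> Fint g u = exp (- y)"] iff by auto
qed

lemma eta_continuous: "phi 0 \<le> y \<Longrightarrow> continuous (at y within {phi 0..}) (eta g)"
  by (rule continuous_within_inverse_atLeast[OF phi_continuous_on phi_strict_mono_on
        eta_inverse_phi])

definition eta' :: "real \<Rightarrow> real" where "eta' y = exp (g (eta g y) - y)"

lemma eta'_eq: "phi 0 \<le> y \<Longrightarrow> eta' y = Fint g (eta g y) / e (eta g y)"
  using eta_inverse_phi[of y] Fint_eq_exp_phi[of "eta g y"]
  by (simp add: eta'_def e_def exp_diff exp_minus field_simps)

lemma eta_has_real_derivative:
  assumes "phi 0 \<le> y" shows "(eta g has_real_derivative eta' y) (at y within {phi 0..})"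
proof -
  define u where "u = eta g y"
  have "0 \<le> u"
    using eta_inverse_phi[OF assms] by (simp add: u_def)
  have "(eta g has_real_derivative inverse (e u / Fint g u)) (at y within {phi 0..})"
  proof (rule has_real_derivative_inverse_within)
    show "(phi has_real_derivative e u / Fint g u) (at (eta g y) within {0..})"
      using phi_has_real_derivative[OF \<open>0 \<le> u\<close>] by (simp add: u_def)
    show "e u / Fint g u \<noteq> 0"
      using e_pos[of u] Fint_pos[OF \<open>0 \<le> u\<close>] by simp
    show "eta g ` {phi 0..} \<subseteq> {0..}"
      using eta_inverse_phi by auto
    show "phi (eta g z) = z" if "z \<in> {phi 0..}" for z
      using eta_inverse_phi that by auto
    show "continuous (at y within {phi 0..}) (eta g)"
      by (rule eta_continuous[OF assms])
  qed (use assms in simp)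
  moreover have "inverse (e u / Fint g u) = eta' y"
    using eta'_eq[OF assms] by (simp add: u_def)
  ultimately show ?thesis
    by (simp only:)
qed

lemma comp_eta_has_real_derivative:
  assumes "phi 0 \<le> y"
    and "\<And>x. 0 \<le> x \<Longrightarrow> (q has_real_derivative q' x) (at x within {0..})"
  shows "((\<lambda>y. q (eta g y)) has_real_derivative q' (eta g y) * eta' y) (at y within {phi 0..})"
proof -
  have "eta g ` {phi 0..} \<subseteq> {0..}"
    using eta_inverse_phi by auto
  with assms(2)
  have "(q has_real_derivative q' (eta g y)) (at (eta g y) within eta g ` {phi 0..})"
    by (rule has_field_derivative_subset) (use eta_inverse_phi[OF assms(1)] in simp)
  from DERIV_image_chain[OF this eta_has_real_derivative[OF assms(1)]] show ?thesis
    by (simp add: o_def)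
qed

definition A :: "real \<Rightarrow> real" where "A y = g1 (eta g y)"
definition B :: "real \<Rightarrow> real" where "B y = g2 (eta g y)"
definition C :: "real \<Rightarrow> real" where "C y = g3 (eta g y)"

definition h1 :: "real \<Rightarrow> real" where
  "h1 y = eta' y * (A y - (B y + (A y)\<^sup>2) * eta' y)"

definition h2 :: "real \<Rightarrow> real" where
  "h2 y = eta' y * (- A y + 3 * (B y + (A y)\<^sup>2) * eta' y
    - (C y + 4 * A y * B y + 2 * A y ^ 3) * (eta' y)\<^sup>2)"

lemma A_has_real_derivative:
  "phi 0 \<le> y \<Longrightarrow> (A has_real_derivative B y * eta' y) (at y within {phi 0..})"
  unfolding A_def[abs_def] B_def by (rule comp_eta_has_real_derivative[OF _ d2])

lemma B_has_real_derivative: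
  "phi 0 \<le> y \<Longrightarrow> (B has_real_derivative C y * eta' y) (at y within {phi 0..})"
  unfolding B_def[abs_def] C_def by (rule comp_eta_has_real_derivative[OF _ d3])

lemma eta'_has_real_derivative:
  assumes "phi 0 \<le> y"
  shows "(eta' has_real_derivative eta' y * (A y * eta' y - 1)) (at y within {phi 0..})"
  unfolding eta'_def[abs_def] A_def
  by (rule DERIV_chain2[OF DERIV_exp DERIV_diff[OF
        comp_eta_has_real_derivative[OF assms d1, unfolded eta'_def] DERIV_ident]])

lemma hfun_eq: "phi 0 \<le> y \<Longrightarrow> hfun g g1 y = 1 - A y * eta' y"
  using eta_inverse_phi[of y] Fint_eq_exp_phi[of "eta g y"]
  by (simp add: hfun_def fexp_def A_def eta'_def exp_diff exp_minus field_simps)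

lemma hfun_has_real_derivative:
  assumes "phi 0 \<le> y" shows "(hfun g g1 has_real_derivative h1 y) (at y within {phi 0..})"
proof -
  have "((\<lambda>y. 1 - A y * eta' y) has_real_derivative h1 y) (at y within {phi 0..})"
    by (rule DERIV_cong[OF DERIV_diff[OF DERIV_const
          DERIV_mult[OF A_has_real_derivative[OF assms] eta'_has_real_derivative[OF assms]]]])
       (simp add: h1_def algebra_simps power2_eq_square)
  then show ?thesis
    by (rule has_field_derivative_transform_within[where d=1]) (use assms hfun_eq in auto)
qed

lemma h1_has_real_derivative:
  assumes "phi 0 \<le> y" shows "(h1 has_real_derivative h2 y) (at y within {phi 0..})"
  unfolding h1_def[abs_def]
  by (rule DERIV_cong[OF DERIV_mult[OF eta'_has_real_derivative[OF assms]
        DERIV_diff[OF A_has_real_derivative[OF assms]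
          DERIV_mult[OF DERIV_add[OF B_has_real_derivative[OF assms]
              DERIV_power[OF A_has_real_derivative[OF assms], of 2]]
            eta'_has_real_derivative[OF assms]]]]])
     (simp add: h2_def algebra_simps power2_eq_square power3_eq_cube)

lemma h2_div_h1_le_4:
  assumes "phi 0 \<le> y" shows "h2 y / h1 y \<le> 4"
  unfolding h1_def h2_def
proof (rule h_derivative_ratio_le_four)
  define u where "u = eta g y"
  have "0 \<le> u"
    using eta_inverse_phi[OF assms] by (simp add: u_def)
  then show "0 < A y" "0 < B y" "B y \<le> (A y)\<^sup>2" "A y * C y < 2 * (B y)\<^sup>2"
    using pos1 pos2 h3 h4 by (auto simp: A_def B_def C_def u_def[symmetric])
  have "eta' y = Fint g u / e u"
    using eta'_eq[OF assms] by (simp add: u_def)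
  then show "A y / (B y + (A y)\<^sup>2) \<le> eta' y" "eta' y \<le> 1 / A y"
    using Fint_ge[OF \<open>0 \<le> u\<close>] Fint_le[OF \<open>0 \<le> u\<close>] e_pos[of u] pos1[OF \<open>0 \<le> u\<close>]
    by (simp_all add: A_def B_def u_def[symmetric] lower_ratio_def pos_le_divide_eq pos_divide_le_eq)
qed

end

theorem lemma3p4:
  fixes g g1 g2 g3 :: "real \<Rightarrow> real"
  assumes d1: "\<And>x. 0 \<le> x \<Longrightarrow> (g has_real_derivative g1 x) (at x within {0..})"
    and d2: "\<And>x. 0 \<le> x \<Longrightarrow> (g1 has_real_derivative g2 x) (at x within {0..})"
    and d3: "\<And>x. 0 \<le> x \<Longrightarrow> (g2 has_real_derivative g3 x) (at x within {0..})"
    and c3: "continuous_on {0..} g3"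
    and pos1: "\<And>x. 0 \<le> x \<Longrightarrow> g1 x > 0"
    and pos2: "\<And>x. 0 \<le> x \<Longrightarrow> g2 x > 0"
    and h3: "\<And>x. 0 \<le> x \<Longrightarrow> (g1 x)\<^sup>2 - g2 x \<ge> 0"
    and h4: "\<And>x. 0 \<le> x \<Longrightarrow> 2 * (g2 x)\<^sup>2 - g1 x * g3 x > 0"
  shows "\<exists>h1 h2 :: real \<Rightarrow> real.
           (\<forall>y \<ge> - ln (Fint g 0).
              (hfun g g1 has_real_derivative h1 y) (at y within {- ln (Fint g 0)..}) \<and>
              (h1 has_real_derivative h2 y) (at y within {- ln (Fint g 0)..}) \<and>
              h2 y / h1 y \<le> 4)"
proof -
  interpret admissible_exponent g g1 g2 g3
    by unfold_locales (fact d1 d2 d3 pos1 pos2 h3 h4)+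
  show ?thesis
    unfolding phi_def[of 0, symmetric]
    by (intro exI[of _ h1] exI[of _ h2] allI impI conjI
        hfun_has_real_derivative h1_has_real_derivative h2_div_h1_le_4)
qed

end
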